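(* Consider Algorithm FoBa-gdt with parameter $\epsilon>0$, and let $\beta^{(k)}$ with support $F^{(k)}$ be the iterate at the beginning of some iteration with $k\ge1$. Then for any $\bar\beta\in\mathbb{R}^d$ with support $\bar F$, $$\|\beta^{(k)}_{F^{(k)}-\bar F}\|^2=\|(\beta^{(k)}-\bar\beta)_{F^{(k)}-\bar F}\|^2\ge\frac{\delta^{(k)}}{\rho_+(1)}|F^{(k)}-\bar F|\ge\frac{\epsilon^2}{2\rho_+(1)^2}|F^{(k)}-\bar F|.$$
   Context: Let $Q:\mathbb{R}^d\to\mathbb{R}$ be convex and continuously differentiable. $e_j$ is the $j$-th standard basis vector, $\mathrm{supp}(\beta)=\{j:\beta_j\ne0\}$, $\|\beta\|_0=|\mathrm{supp}(\beta)|$, $\|\cdot\|$ is the Euclidean norm, $A-B$ is set difference, and $v_S$ is $v$ restricted to the coordinates in $S$. For $F\subseteq\{1,\dots,d\}$, $\hat\beta(F)$ denotes a minimizer of $Q$ over $\{\beta:\mathrm{supp}(\beta)\subseteq F\}$ (assumed to exist). For a positive integer $s$, the restricted strong convexity constants $\rho_-(s),\rho_+(s)>0$ are constants such that for all $\beta,\beta'\in\mathbb{R}^d$ with $\|\beta'-\beta\|_0\le s$: $\frac{\rho_-(s)}{2}\|\beta'-\beta\|^2\le Q(\beta')-Q(\beta)-\langle\nabla Q(\beta),\beta'-\beta\rangle\le\frac{\rho_+(s)}{2}\|\beta'-\beta\|^2.$ Algorithm FoBa has two variants: FoBa-obj (parameter $\delta>0$) and FoBa-gdt (parameter $\epsilon>0$).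 Initialize $F^{(0)}=\emptyset$, $\beta^{(0)}=0$, $k=0$, and repeat the following iteration. (1) Stopping test: FoBa-obj stops if $Q(\beta^{(k)})-\min_{\alpha\in\mathbb{R},\,j\notin F^{(k)}}Q(\beta^{(k)}+\alpha e_j)<\delta$; FoBa-gdt stops if $\|\nabla Q(\beta^{(k)})\|_\infty<\epsilon$. On stopping the output is $\beta^{(k)}$ with support $F^{(k)}$, and the algorithm is said to terminate at $k$. (2) Forward step: FoBa-obj picks $i^{(k)}\in\arg\min_{i\notin F^{(k)}}\min_\alpha Q(\beta^{(k)}+\alpha e_i)$; FoBa-gdt picks $i^{(k)}\in\arg\max_{i\notin F^{(k)}}|\nabla Q(\beta^{(k)})_i|$. Set $F^{(k+1)}=F^{(k)}\cup\{i^{(k)}\}$, $\beta^{(k+1)}=\hat\beta(F^{(k+1)})$, $\delta^{(k+1)}=Q(\beta^{(k)})-Q(\beta^{(k+1)})$, $k\leftarrow k+1$. (3) Backward step: repeat — if $F^{(k)}=\emptyset$ or $\min_{i\in F^{(k)}}Q(\beta^{(k)}-\beta^{(k)}_ie_i)-Q(\beta^{(k)})\ge\delta^{(k)}/2$, leave the backward step; otherwise pick $j\in\arg\min_{i\in F^{(k)}}Q(\beta^{(k)}-\beta^{(k)}_ie_i)$, set $F^{(k-1)}=F^{(k)}-\{j\}$, $\beta^{(k-1)}=\hat\beta(F^{(k-1)})$, $k\leftarrow k-1$ (where $\delta^{(k-1)}$ is the value recorded at the most recent forward step producing index $k-1$). Thus $|F^{(k)}|=k$ always. "At the beginning of an iteration"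 means the state just before a stopping test. *)

theory Defs
  imports "HOL-Analysis.Analysis"
begin

text \<open>Vectors in R^d are rendered as real^'n with 'n a finite index type (d = CARD('n)).
  The standard basis vector e_j is axis j 1.\<close>

definition supp :: "real^'n \<Rightarrow> 'n set" where
  "supp b = {j. b $ j \<noteq> 0}"

definition l0 :: "real^'n \<Rightarrow> nat" where
  "l0 b = card (supp b)"

definition restr :: "real^'n \<Rightarrow> 'n set \<Rightarrow> real^'n" where
  "restr v S = (\<chi> j. if j \<in> S then v $ j else 0)"

definition minimizes_on :: "(real^'n \<Rightarrow> real) \<Rightarrow> 'n set \<Rightarrow> real^'n \<Rightarrow> bool" where
  "minimizes_on Q F b \<longleftrightarrow> supp b \<subseteq> F \<and> (\<forall>b'. supp b' \<subseteq> F \<longrightarrow> Q b \<le> Q b')"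

text \<open>Restricted strong convexity with constants rm = rho_-(s), rp = rho_+(s).\<close>
definition rsc :: "(real^'n \<Rightarrow> real) \<Rightarrow> (real^'n \<Rightarrow> real^'n) \<Rightarrow> nat \<Rightarrow> real \<Rightarrow> real \<Rightarrow> bool" where
  "rsc Q gradQ s rm rp \<longleftrightarrow> rm > 0 \<and> rp > 0 \<and>
     (\<forall>b b'. l0 (b' - b) \<le> s \<longrightarrow>
        rm / 2 * norm (b' - b)^2 \<le> Q b' - Q b - gradQ b \<bullet> (b' - b) \<and>
        Q b' - Q b - gradQ b \<bullet> (b' - b) \<le> rp / 2 * norm (b' - b)^2)"

text \<open>A state is (F, beta, dl) where F = F^(k) (so k = card F),
  beta = beta^(k), and dl m is the value delta^(m) recorded at the most recent forward step
  producing index m. foba_begin: states at the beginning of an iteration (just before a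
  stopping test); foba_back: states inside the backward step. All choices (argmax ties,
  argmin ties, choice of minimizer beta-hat) are nondeterministic.\<close>
inductive foba_begin :: "(real^'n \<Rightarrow> real) \<Rightarrow> (real^'n \<Rightarrow> real^'n) \<Rightarrow> real
      \<Rightarrow> 'n set \<times> (real^'n) \<times> (nat \<Rightarrow> real) \<Rightarrow> bool"
  and foba_back :: "(real^'n \<Rightarrow> real) \<Rightarrow> (real^'n \<Rightarrow> real^'n) \<Rightarrow> real
      \<Rightarrow> 'n set \<times> (real^'n) \<times> (nat \<Rightarrow> real) \<Rightarrow> bool"
  for Q gradQ eps where
  init: "foba_begin Q gradQ eps ({}, 0, \<lambda>_. 0)"
| fwd: "\<lbrakk> foba_begin Q gradQ eps (F, b, dl);
          \<not> (infnorm (gradQ b) < eps);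
          i \<notin> F; \<forall>i'. i' \<notin> F \<longrightarrow> \<bar>gradQ b $ i'\<bar> \<le> \<bar>gradQ b $ i\<bar>;
          minimizes_on Q (insert i F) b' \<rbrakk>
        \<Longrightarrow> foba_back Q gradQ eps (insert i F, b', dl(card F + 1 := Q b - Q b'))"
| bwd: "\<lbrakk> foba_back Q gradQ eps (F, b, dl);
          F \<noteq> {};
          \<exists>i\<in>F. Q (b - b $ i *\<^sub>R axis i 1) - Q b < dl (card F) / 2;
          j \<in> F; \<forall>i\<in>F. Q (b - b $ j *\<^sub>R axis j 1) \<le> Q (b - b $ i *\<^sub>R axis i 1);
          minimizes_on Q (F - {j}) b' \<rbrakk>
        \<Longrightarrow> foba_back Q gradQ eps (F - {j}, b', dl)"
| leave: "\<lbrakk> foba_back Q gradQ eps (F, b, dl);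
          F = {} \<or> (\<forall>i\<in>F. Q (b - b $ i *\<^sub>R axis i 1) - Q b \<ge> dl (card F) / 2) \<rbrakk>
        \<Longrightarrow> foba_begin Q gradQ eps (F, b, dl)"

end

theory Submission
  imports Defs
begin

text \<open>At a minimizer over F the gradient vanishes on F. So if FoBa-gdt does not stop, the
  coordinate it adds has gradient of size at least eps, and restricted smoothness along that
  coordinate shows that the forward step decreases Q by at least eps^2/(2 rho_+(1)). Backward
  steps only shrink the support, so every recorded delta^(m) with m <= k keeps this lower bound.
  Conversely, at the beginning of an iteration the backward step has just declined to delete a
  coordinate, so deleting coordinate i raises Q by at least delta^(k)/2, while restricted
  smoothness bounds this increase by rho_+(1) beta_i^2/2. Summing beta_i^2 >= delta^(k)/rho_+(1)
  over the coordinates of F^(k) outside the support of beta-bar gives the bound.\<close>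

lemma infnorm_cart_le_iff: "infnorm (x::real^'n) \<le> c \<longleftrightarrow> (\<forall>i. \<bar>x $ i\<bar> \<le> c)"
proof -
  have "{\<bar>x $ i\<bar> |i. i \<in> UNIV} = range (\<lambda>i. \<bar>x $ i\<bar>)" by auto
  then show ?thesis unfolding infnorm_cart by (simp add: cSup_le_iff)
qed

lemma norm_restr_power2: "norm (restr v S)^2 = (\<Sum>j\<in>S. (v $ j)^2)"
  unfolding power2_norm_eq_inner inner_vec_def restr_def
  by (simp add: power2_eq_square if_distrib sum.If_cases)

lemma restr_diff_outside_supp: "restr b (F - supp c) = restr (b - c) (F - supp c)"
  unfolding restr_def supp_def by (auto simp: vec_eq_iff)

lemma supp_add_axis: "supp b \<subseteq> F \<Longrightarrow> supp (b + t *\<^sub>R axis i 1) \<subseteq> insert i F"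
  unfolding supp_def by (auto simp: axis_def)

lemma minimizes_on_empty: "minimizes_on Q {} 0"
proof -
  have "b = 0" if "supp b \<subseteq> {}" for b :: "real^'n"
    using that unfolding supp_def by (auto simp: vec_eq_iff)
  then show ?thesis unfolding minimizes_on_def by (auto simp: supp_def)
qed

lemma rsc_pos: "rsc Q gradQ s rm rp \<Longrightarrow> rm > 0 \<and> rp > 0"
  unfolding rsc_def by simp

lemma rsc_coordinate_upper:
  assumes "rsc Q gradQ 1 rm rp"
  shows "Q (b + t *\<^sub>R axis i 1) \<le> Q b + t * gradQ b $ i + rp / 2 * t^2"
proof -
  have "supp (t *\<^sub>R axis i (1::real)) \<subseteq> {i}"
    unfolding supp_def by (auto simp: axis_def)
  then have "l0 ((b + t *\<^sub>R axis i 1) - b) \<le> 1"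
    unfolding l0_def using card_mono[of "{i}"] by simp
  with assms have "Q (b + t *\<^sub>R axis i 1) - Q b - gradQ b \<bullet> (t *\<^sub>R axis i 1)
      \<le> rp / 2 * norm (t *\<^sub>R axis i (1::real))^2"
    unfolding rsc_def by fastforce
  then show ?thesis by (simp add: inner_axis power_mult_distrib)
qed

lemma rsc_coordinate_descent:
  assumes "rsc Q gradQ 1 rm rp"
  shows "Q (b + (- gradQ b $ i / rp) *\<^sub>R axis i 1) \<le> Q b - (gradQ b $ i)^2 / (2 * rp)"
proof -
  have "rp > 0" using rsc_pos[OF assms] by simp
  moreover have "Q (b + (- gradQ b $ i / rp) *\<^sub>R axis i 1)
      \<le> Q b + (- gradQ b $ i / rp) * gradQ b $ i + rp / 2 * (- gradQ b $ i / rp)^2"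
    by (rule rsc_coordinate_upper[OF assms])
  ultimately show ?thesis by (simp add: field_simps power2_eq_square)
qed

lemma minimizes_on_gradient_zero:
  assumes "rsc Q gradQ 1 rm rp" and "minimizes_on Q F b" and "i \<in> F"
  shows "gradQ b $ i = 0"
proof -
  have "rp > 0" using rsc_pos[OF assms(1)] by simp
  have "supp (b + (- gradQ b $ i / rp) *\<^sub>R axis i 1) \<subseteq> F"
    using assms(2,3) supp_add_axis unfolding minimizes_on_def by (metis insert_absorb)
  then have "Q b \<le> Q (b + (- gradQ b $ i / rp) *\<^sub>R axis i 1)"
    using assms(2) unfolding minimizes_on_def by blast
  then have "(gradQ b $ i)^2 / (2 * rp) \<le> 0"
    using rsc_coordinate_descent[OF assms(1), of b i] by linarith
  with \<open>rp > 0\<close> show ?thesis by (simp add: divide_le_0_iff)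
qed

lemma forward_step_decrease:
  assumes rsc: "rsc Q gradQ 1 rm rp" and "eps > 0"
    and min: "minimizes_on Q F b" and no_stop: "\<not> infnorm (gradQ b) < eps"
    and i: "i \<notin> F" and greedy: "\<forall>i'. i' \<notin> F \<longrightarrow> \<bar>gradQ b $ i'\<bar> \<le> \<bar>gradQ b $ i\<bar>"
    and min': "minimizes_on Q (insert i F) b'"
  shows "eps^2 / (2 * rp) \<le> Q b - Q b'"
proof -
  have "rp > 0" using rsc_pos[OF rsc] by simp
  have "\<bar>gradQ b $ j\<bar> \<le> \<bar>gradQ b $ i\<bar>" for j
    using greedy minimizes_on_gradient_zero[OF rsc min, of j] by (cases "j \<in> F") auto
  then have "infnorm (gradQ b) \<le> \<bar>gradQ b $ i\<bar>"
    by (simp add: infnorm_cart_le_iff)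
  then have "eps \<le> \<bar>gradQ b $ i\<bar>" using no_stop by linarith
  then have "eps^2 \<le> (gradQ b $ i)^2"
    using \<open>eps > 0\<close> by (metis power2_abs power_mono less_imp_le)
  then have "eps^2 / (2 * rp) \<le> (gradQ b $ i)^2 / (2 * rp)"
    using \<open>rp > 0\<close> by (simp add: divide_right_mono)
  moreover have "Q b' \<le> Q (b + (- gradQ b $ i / rp) *\<^sub>R axis i 1)"
    using min min' supp_add_axis unfolding minimizes_on_def by blast
  ultimately show ?thesis using rsc_coordinate_descent[OF rsc, of b i] by linarith
qed

lemma minimizes_on_deletion_increase:
  assumes "rsc Q gradQ 1 rm rp" and "minimizes_on Q F b" and "i \<in> F"
  shows "Q (b - b $ i *\<^sub>R axis i 1) - Q b \<le> rp / 2 * (b $ i)^2"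
  using rsc_coordinate_upper[OF assms(1), of b "- b $ i" i]
    minimizes_on_gradient_zero[OF assms] by simp

definition foba_invariant :: "(real^'n \<Rightarrow> real) \<Rightarrow> real \<Rightarrow> real
    \<Rightarrow> 'n set \<times> (real^'n) \<times> (nat \<Rightarrow> real) \<Rightarrow> bool" where
  "foba_invariant Q eps rp st \<longleftrightarrow> (case st of (F, b, dl) \<Rightarrow>
     minimizes_on Q F b \<and> (\<forall>m. 1 \<le> m \<and> m \<le> card F \<longrightarrow> eps^2 / (2 * rp) \<le> dl m))"

lemma foba_invariant_holds:
  fixes Q :: "real^'n \<Rightarrow> real"
  assumes rsc: "rsc Q gradQ 1 rm rp" and "eps > 0"
  shows "foba_begin Q gradQ eps st \<Longrightarrow> foba_invariant Q eps rp st"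
    and "foba_back Q gradQ eps st \<Longrightarrow> foba_invariant Q eps rp st"
proof (induction rule: foba_begin_foba_back.inducts)
  case init
  show ?case unfolding foba_invariant_def using minimizes_on_empty by simp
next
  case (fwd F b dl i b')
  then have "minimizes_on Q F b" unfolding foba_invariant_def by simp
  with fwd forward_step_decrease[OF rsc \<open>eps > 0\<close>]
  have "eps^2 / (2 * rp) \<le> Q b - Q b'" by blast
  moreover have "card (insert i F) = card F + 1" using \<open>i \<notin> F\<close> by simp
  ultimately show ?case using fwd unfolding foba_invariant_def by (auto simp: le_Suc_eq)
next
  case (bwd F b dl j b')
  have "card (F - {j}) \<le> card F" by (simp add: card_mono)
  with bwd show ?case unfolding foba_invariant_def by auto
next
  case (leave F b dl)
  then show ?case by simp
qed

lemma foba_begin_deletion_increase: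
  assumes "foba_begin Q gradQ eps (F, b, dl)" and "F \<noteq> {}" and "i \<in> F"
  shows "dl (card F) / 2 \<le> Q (b - b $ i *\<^sub>R axis i 1) - Q b"
  using assms by (cases rule: foba_begin.cases) auto

theorem mainTheorem12:
  fixes Q :: "real^'n \<Rightarrow> real" and gradQ :: "real^'n \<Rightarrow> real^'n"
    and eps rm rp :: real and F :: "'n set" and b bbar :: "real^'n" and dl :: "nat \<Rightarrow> real"
  assumes convex: "convex_on UNIV Q"
    and grad: "\<And>x. (Q has_derivative (\<lambda>h. gradQ x \<bullet> h)) (at x)"
    and grad_cont: "continuous_on UNIV gradQ"
    and minex: "\<And>G. \<exists>x. minimizes_on Q G x"
    and rsc1: "rsc Q gradQ 1 rm rp"
    and eps_pos: "eps > 0"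
    and state: "foba_begin Q gradQ eps (F, b, dl)"
    and k_pos: "card F \<ge> 1"
  shows "norm (restr b (F - supp bbar))^2 = norm (restr (b - bbar) (F - supp bbar))^2
       \<and> norm (restr (b - bbar) (F - supp bbar))^2 \<ge> dl (card F) / rp * real (card (F - supp bbar))
       \<and> dl (card F) / rp * real (card (F - supp bbar)) \<ge> eps^2 / (2 * rp^2) * real (card (F - supp bbar))"
proof -
  define S where "S = F - supp bbar"
  have "rp > 0" using rsc_pos[OF rsc1] by simp
  have inv: "minimizes_on Q F b" "eps^2 / (2 * rp) \<le> dl (card F)"
    using foba_invariant_holds(1)[OF rsc1 eps_pos state] k_pos
    unfolding foba_invariant_def by auto
  have "F \<noteq> {}" using k_pos by auto
  have "dl (card F) / rp \<le> (b $ i)^2" if "i \<in> F" for i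
  proof -
    have "dl (card F) / 2 \<le> rp / 2 * (b $ i)^2"
      using foba_begin_deletion_increase[OF state \<open>F \<noteq> {}\<close> that]
        minimizes_on_deletion_increase[OF rsc1 inv(1) that] by linarith
    with \<open>rp > 0\<close> show ?thesis by (simp add: divide_le_eq mult.commute)
  qed
  then have "(\<Sum>j\<in>S. dl (card F) / rp) \<le> (\<Sum>j\<in>S. (b $ j)^2)"
    by (intro sum_mono) (simp add: S_def)
  then have "dl (card F) / rp * real (card S) \<le> norm (restr b S)^2"
    by (simp add: norm_restr_power2 mult.commute)
  moreover have "eps^2 / (2 * rp^2) \<le> dl (card F) / rp"
    using inv(2) \<open>rp > 0\<close> by (simp add: field_simps power2_eq_square)
  then have "eps^2 / (2 * rp^2) * real (card S) \<le> dl (card F) / rp * real (card S)"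
    by (rule mult_right_mono) simp
  ultimately show ?thesis
    using restr_diff_outside_supp[of b F bbar] unfolding S_def by simp
qed

end
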